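(* Let $\alpha\in(0,1)$ and $T>0$. There is no function $\psi\in C^1((0,T]^2)\cap C([0,T]^2)$ with $\partial_t\psi(\cdot,s)\in L^1(0,T)$ for every $s\in[0,T]$ and $\partial_s\psi(t,\cdot)\in L^1(0,T)$ for every $t\in[0,T]$ such that $$\partial_t^\alpha\psi(\cdot,s)(t)+\partial_s^\alpha\psi(t,\cdot)(s)\ge0\ \text{ for all }(t,s)\in(0,T)^2,\qquad \psi(t,t)=0\ \text{ for all } t\in[0,T],\qquad \psi>0\ \text{ on } [0,T]^2\setminus\{t=s\}.$$
   Context: $\partial_t^\alpha$ denotes Caputo's fractional derivative in the variable $t$: for a function $f$ of one variable, $(\partial_t^\alpha f)(t)=\frac{1}{\Gamma(1-\alpha)}\int_0^t\frac{f'(\tau)}{(t-\tau)^\alpha}d\tau$; $\partial_t^\alpha\psi(\cdot,s)(t)$ is this derivative of $t\mapsto\psi(t,s)$ evaluated at $t$, and analogously for $\partial_s^\alpha\psi(t,\cdot)(s)$. *)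

theory Defs
  imports "HOL-Analysis.Analysis"
begin

definition caputo :: "real \<Rightarrow> (real \<Rightarrow> real) \<Rightarrow> real \<Rightarrow> real" where
  "caputo \<alpha> f t = (1 / Gamma (1 - \<alpha>)) * (LBINT \<tau>:{0<..<t}. deriv f \<tau> / (t - \<tau>) powr \<alpha>)"

definition C1_on2 :: "(real \<times> real) set \<Rightarrow> (real \<times> real \<Rightarrow> real) \<Rightarrow> bool" where
  "C1_on2 S f \<longleftrightarrow> (\<exists>Dt Ds. continuous_on S Dt \<and> continuous_on S Ds \<and>
     (\<forall>p\<in>S. (f has_derivative (\<lambda>(h, k). Dt p * h + Ds p * k)) (at p within S)))"

end

theory Submission
  imports Defs
begin

text \<open>Take a point \<open>(c, c)\<close> on the diagonal. The slice \<open>f \<tau> = \<psi> (\<tau>, c)\<close> is positive on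
  \<open>[0, c)\<close> and vanishes at \<open>c\<close>, so integrating by parts against the kernel
  \<open>(c - \<tau>) powr (-\<alpha>)\<close> expresses the Caputo integral of \<open>f\<close> at \<open>c\<close> as
  \<open>- f 0 / c powr \<alpha>\<close> minus the integral of \<open>\<alpha> * f \<tau> / (c - \<tau>) powr (\<alpha> + 1) \<ge> 0\<close>,
  which is negative. By symmetry (apply the same to \<open>\<psi> \<circ> prod.swap\<close>) both Caputo derivatives
  of \<open>\<psi>\<close> at \<open>(c, c)\<close> are negative, contradicting the nonnegativity of their sum.\<close>

lemma powr_diff_neg_integrable_on:
  fixes \<alpha> c :: real
  assumes "\<alpha> < 1" "0 \<le> c"
  shows "(\<lambda>\<tau>. (c - \<tau>) powr (-\<alpha>)) integrable_on {0..c}"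
proof -
  define G where "G \<tau> = - ((c - \<tau>) powr (1 - \<alpha>)) / (1 - \<alpha>)" for \<tau>
  have "((\<lambda>\<tau>. (c - \<tau>) powr (-\<alpha>)) has_integral G c - G 0) {0..c}"
  proof (rule fundamental_theorem_of_calculus_interior)
    show "continuous_on {0..c} G" unfolding G_def using assms
      by (intro continuous_intros continuous_on_powr') auto
    fix x assume x: "x \<in> {0<..<c}"
    have "((\<lambda>\<tau>. (c - \<tau>) powr (1 - \<alpha>)) has_real_derivative
        (1 - \<alpha>) * (c - x) powr (1 - \<alpha> - 1) * (0 - 1)) (at x)"
      using x by (intro DERIV_chain2[OF has_real_derivative_powr] derivative_intros) auto
    then have "(G has_real_derivative (c - x) powr (-\<alpha>)) (at x)"
      unfolding G_def using assms x by (auto intro!: derivative_eq_intros)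
    then show "(G has_vector_derivative (c - x) powr (-\<alpha>)) (at x)"
      by (simp add: has_real_derivative_iff_has_vector_derivative)
  qed (use assms in simp)
  then show ?thesis by blast
qed

lemma tendsto_divide_powr_at_root:
  fixes f :: "real \<Rightarrow> real"
  assumes "\<alpha> < 1" and "(f has_real_derivative D) (at c within S)" and "f c = 0"
    and "\<forall>y\<in>S. y \<le> c"
  shows "((\<lambda>y. f y / (c - y) powr \<alpha>) \<longlongrightarrow> 0) (at c within S)"
proof -
  have quotient: "((\<lambda>y. (f y - f c) / (y - c)) \<longlongrightarrow> D) (at c within S)"
    using assms(2) by (simp add: has_field_derivative_iff)
  have "((\<lambda>y. (c - y) powr (1 - \<alpha>)) \<longlongrightarrow> 0) (at c within S)"
    using assms(1,4)
    by (intro tendsto_zero_powrI tendsto_eq_intros) (auto simp: eventually_at_filter)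
  then have "((\<lambda>y. - ((c - y) powr (1 - \<alpha>))) \<longlongrightarrow> 0) (at c within S)"
    using tendsto_minus by fastforce
  from tendsto_mult[OF quotient this]
  have "((\<lambda>y. (f y - f c) / (y - c) * - ((c - y) powr (1 - \<alpha>))) \<longlongrightarrow> 0)
      (at c within S)"
    by (simp only: mult_zero_right)
  then show ?thesis
  proof (rule Lim_transform_eventually)
    have "(f y - f c) / (y - c) * - ((c - y) powr (1 - \<alpha>)) = f y / (c - y) powr \<alpha>"
      if "y \<in> S" "y \<noteq> c" for y
    proof -
      have "c - y > 0" using that assms(4) by force
      then show ?thesis
        by (simp add: powr_diff assms(3) field_simps)
    qed
    then show "\<forall>\<^sub>F y in at c within S.
        (f y - f c) / (y - c) * - ((c - y) powr (1 - \<alpha>)) = f y / (c - y) powr \<alpha>"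
      by (auto simp: eventually_at_filter)
  qed
qed

lemma absolutely_integrable_on_if_set_integrable_lborel:
  fixes f :: "'a::euclidean_space \<Rightarrow> real"
  assumes "set_integrable lborel A f"
  shows "f absolutely_integrable_on A"
proof -
  have "integrable lborel (\<lambda>x. indicat_real A x *\<^sub>R f x)"
    using assms by (simp add: set_integrable_def)
  then have "integrable lebesgue (\<lambda>x. indicat_real A x *\<^sub>R f x)"
    by (subst integrable_completion) (auto dest: borel_measurable_integrable)
  then show ?thesis by (simp add: set_integrable_def)
qed

lemma set_integrable_lborel_if_absolutely_integrable_on:
  fixes f :: "'a::euclidean_space \<Rightarrow> real"
  assumes "A \<in> sets borel" and "continuous_on A f" and "f absolutely_integrable_on A"
  shows "set_integrable lborel A f"
  using assms borel_measurable_continuous_on_indicator[OF assms(1,2)]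
  unfolding set_integrable_def by (subst (asm) integrable_completion) auto

text \<open>Split at \<open>c / 2\<close>: the kernel is bounded on the left half, the function on the right half.\<close>
lemma absolutely_integrable_on_divide_powr:
  fixes g :: "real \<Rightarrow> real"
  assumes "0 \<le> \<alpha>" "\<alpha> < 1" "0 < c"
    and "continuous_on {0<..c} g" and "g absolutely_integrable_on {0<..<c}"
  shows "(\<lambda>\<tau>. g \<tau> / (c - \<tau>) powr \<alpha>) absolutely_integrable_on {0<..<c}"
proof -
  obtain M where M: "\<And>\<tau>. \<tau> \<in> {c/2..c} \<Longrightarrow> \<bar>g \<tau>\<bar> \<le> M"
  proof -
    have "compact (g ` {c/2..c})"
      by (rule compact_continuous_image[OF continuous_on_subset[OF assms(4)]]) (use assms in auto)
    then obtain M where "\<forall>x\<in>{c/2..c}. \<bar>g x\<bar> \<le> M"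
      by (metis compact_imp_bounded bounded_real image_eqI)
    then show ?thesis using that by blast
  qed
  show ?thesis
  proof (rule measurable_bounded_by_integrable_imp_absolutely_integrable)
    show "(\<lambda>\<tau>. g \<tau> / (c - \<tau>) powr \<alpha>) \<in> borel_measurable (lebesgue_on {0<..<c})"
      by (intro continuous_imp_measurable_on_sets_lebesgue continuous_intros
          continuous_on_subset[OF assms(4)]) auto
    show "{0<..<c} \<in> sets lebesgue" by simp
    have "(\<lambda>\<tau>. \<bar>g \<tau>\<bar> * (c/2) powr (-\<alpha>)) integrable_on {0<..<c}"
      using assms(5) by (intro integrable_on_mult_left) (auto simp: absolutely_integrable_on_def)
    moreover have "(\<lambda>\<tau>. M * (c - \<tau>) powr (-\<alpha>)) integrable_on {0<..<c}"
      using powr_diff_neg_integrable_on[of \<alpha> c] assms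
      by (intro integrable_on_mult_right) (simp add: integrable_on_open_interval_real)
    ultimately show "(\<lambda>\<tau>. \<bar>g \<tau>\<bar> * (c/2) powr (-\<alpha>) + M * (c - \<tau>) powr (-\<alpha>)) integrable_on {0<..<c}"
      by (rule integrable_add)
    fix \<tau> assume \<tau>: "\<tau> \<in> {0<..<c}"
    have norm_eq: "norm (g \<tau> / (c - \<tau>) powr \<alpha>) = \<bar>g \<tau>\<bar> * (c - \<tau>) powr (-\<alpha>)"
      using \<tau> by (simp add: powr_minus_divide abs_mult divide_inverse)
    have "0 \<le> M" using M[of c] assms(3) by force
    show "norm (g \<tau> / (c - \<tau>) powr \<alpha>) \<le> \<bar>g \<tau>\<bar> * (c/2) powr (-\<alpha>) + M * (c - \<tau>) powr (-\<alpha>)"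
    proof (cases "\<tau> \<le> c/2")
      case True
      then have "(c - \<tau>) powr (-\<alpha>) \<le> (c/2) powr (-\<alpha>)"
        using assms by (intro powr_mono2') auto
      then have "\<bar>g \<tau>\<bar> * (c - \<tau>) powr (-\<alpha>) \<le> \<bar>g \<tau>\<bar> * (c/2) powr (-\<alpha>)"
        by (intro mult_left_mono) auto
      with \<open>0 \<le> M\<close> show ?thesis unfolding norm_eq by (simp add: add_increasing2)
    next
      case False
      then have "\<bar>g \<tau>\<bar> * (c - \<tau>) powr (-\<alpha>) \<le> M * (c - \<tau>) powr (-\<alpha>)"
        using M \<tau> by (intro mult_right_mono) auto
      then show ?thesis unfolding norm_eq by (simp add: add_increasing)
    qed
  qed
qed

lemma continuous_on_divide_powr_at_root:
  fixes f :: "real \<Rightarrow> real"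
  assumes "\<alpha> < 1" and "a < c" and "continuous_on {a..c} f" and "f c = 0"
    and "(f has_real_derivative D) (at c)"
  shows "continuous_on {a..c} (\<lambda>y. f y / (c - y) powr \<alpha>)"
proof -
  have "continuous_on {a..<c} (\<lambda>y. f y / (c - y) powr \<alpha>)"
    by (intro continuous_intros continuous_on_subset[OF assms(3)]) auto
  moreover have "at y within {a..c} = at y within {a..<c}" if "y \<in> {a..<c}" for y
    by (rule at_within_nhd[of _ "{..<c}"]) (use that in auto)
  ultimately have "continuous (at y within {a..c}) (\<lambda>y. f y / (c - y) powr \<alpha>)"
    if "y \<in> {a..<c}" for y
    using that by (auto simp: continuous_on_eq_continuous_within continuous_within)
  moreover have "continuous (at c within {a..c}) (\<lambda>y. f y / (c - y) powr \<alpha>)"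
    using tendsto_divide_powr_at_root[OF assms(1) has_field_derivative_at_within[OF assms(5)] assms(4)]
    by (simp add: continuous_within assms(4))
  ultimately show ?thesis
    unfolding continuous_on_eq_continuous_within by (metis atLeastAtMost_iff atLeastLessThan_iff
      order_less_le)
qed

text \<open>In the integration by parts the boundary term at \<open>c\<close> vanishes because \<open>f\<close> is
  differentiable at its zero \<open>c\<close> and \<open>\<alpha> < 1\<close>.\<close>
lemma integral_deriv_divide_powr_neg:
  fixes f :: "real \<Rightarrow> real"
  assumes "0 \<le> \<alpha>" "\<alpha> < 1" "0 < c"
    and "continuous_on {0..c} f" and "f c = 0" and "\<forall>\<tau>\<in>{0..<c}. f \<tau> > 0"
    and "\<forall>\<tau>\<in>{0<..c}. f differentiable (at \<tau>)"
    and "continuous_on {0<..c} (deriv f)"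
    and "deriv f absolutely_integrable_on {0<..<c}"
  shows "integral {0..c} (\<lambda>\<tau>. deriv f \<tau> / (c - \<tau>) powr \<alpha>) < 0"
proof -
  define h where "h \<tau> = deriv f \<tau> / (c - \<tau>) powr \<alpha>" for \<tau>
  define k where "k \<tau> = \<alpha> * f \<tau> / (c - \<tau>) powr (\<alpha> + 1)" for \<tau>
  define F where "F \<tau> = f \<tau> / (c - \<tau>) powr \<alpha>" for \<tau>
  have f_deriv: "(f has_real_derivative deriv f \<tau>) (at \<tau>)" if "\<tau> \<in> {0<..c}" for \<tau>
    using assms(7) that DERIV_deriv_iff_real_differentiable by blast
  have F_deriv: "(F has_real_derivative h \<tau> + k \<tau>) (at \<tau>)" if \<tau>: "\<tau> \<in> {0<..<c}" for \<tau>
  proof -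
    have "(F has_real_derivative
        (deriv f \<tau> * (c - \<tau>) powr \<alpha> + f \<tau> * (\<alpha> * (c - \<tau>) powr (\<alpha> - 1))) / ((c - \<tau>) powr \<alpha>)\<^sup>2)
        (at \<tau>)"
      unfolding F_def using \<tau> f_deriv[of \<tau>]
      by (auto intro!: derivative_eq_intros simp: power2_eq_square)
    moreover have "(deriv f \<tau> * (c - \<tau>) powr \<alpha> + f \<tau> * (\<alpha> * (c - \<tau>) powr (\<alpha> - 1)))
        / ((c - \<tau>) powr \<alpha>)\<^sup>2 = h \<tau> + k \<tau>"
      using \<tau> by (simp add: h_def k_def powr_diff powr_add power2_eq_square field_simps)
    ultimately show ?thesis by simp
  qed
  have "continuous_on {0..c} F"
    unfolding F_def using assms(3) f_deriv[of c]
    by (intro continuous_on_divide_powr_at_root[OF assms(2) _ assms(4,5)]) auto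
  then have FTC: "((\<lambda>\<tau>. h \<tau> + k \<tau>) has_integral F c - F 0) {0..c}"
    using assms(3) F_deriv
    by (intro fundamental_theorem_of_calculus_interior)
      (auto simp: has_real_derivative_iff_has_vector_derivative)
  have h_int: "h integrable_on {0..c}"
    unfolding h_def using absolutely_integrable_on_divide_powr[OF assms(1-3,8,9)]
    by (auto simp: absolutely_integrable_on_def integrable_on_open_interval_real)
  moreover have k_int: "k integrable_on {0..c}"
    using integrable_diff[OF has_integral_integrable[OF FTC] h_int] by simp
  ultimately have "integral {0..c} h + integral {0..c} k = F c - F 0"
    using integral_add integral_unique[OF FTC] by metis
  moreover have "0 \<le> integral {0..c} k"
    using k_int assms(1,5,6) by (intro integral_nonneg) (auto simp: k_def less_eq_real_def)
  moreover have "F c - F 0 < 0"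
    using assms(3,5,6) by (simp add: F_def)
  ultimately have "integral {0..c} h < 0" by linarith
  then show ?thesis by (simp add: h_def[abs_def])
qed

lemma caputo_neg_at_root:
  fixes f :: "real \<Rightarrow> real"
  assumes "0 \<le> \<alpha>" "\<alpha> < 1" "0 < c"
    and "continuous_on {0..c} f" and "f c = 0" and "\<forall>\<tau>\<in>{0..<c}. f \<tau> > 0"
    and "\<forall>\<tau>\<in>{0<..c}. f differentiable (at \<tau>)"
    and "continuous_on {0<..c} (deriv f)"
    and "set_integrable lborel {0<..<c} (deriv f)"
  shows "caputo \<alpha> f c < 0"
proof -
  let ?h = "\<lambda>\<tau>. deriv f \<tau> / (c - \<tau>) powr \<alpha>"
  have "deriv f absolutely_integrable_on {0<..<c}"
    using assms(9) by (rule absolutely_integrable_on_if_set_integrable_lborel)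
  note integrable = this absolutely_integrable_on_divide_powr[OF assms(1-3,8) this]
  have "set_integrable lborel {0<..<c} ?h"
    using integrable
    by (intro set_integrable_lborel_if_absolutely_integrable_on continuous_intros
        continuous_on_subset[OF assms(8)]) auto
  then have "(LBINT \<tau>:{0<..<c}. ?h \<tau>) = integral {0..c} ?h"
    by (simp add: set_borel_integral_eq_integral integral_open_interval_real)
  also have "\<dots> < 0"
    using assms(1-8) integrable by (intro integral_deriv_divide_powr_neg) auto
  finally show ?thesis
    using Gamma_real_pos[of "1 - \<alpha>"] assms(2) by (simp add: caputo_def divide_neg_pos)
qed

lemma C1_on2_slice:
  assumes "C1_on2 S \<psi>" and "(\<lambda>t. (t, s)) ` I \<subseteq> interior S"
  shows "\<forall>t\<in>I. (\<lambda>t. \<psi> (t, s)) differentiable (at t)"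
    and "continuous_on I (deriv (\<lambda>t. \<psi> (t, s)))"
proof -
  obtain Dt Ds where Dt: "continuous_on S Dt"
    and D: "\<forall>p\<in>S. (\<psi> has_derivative (\<lambda>(h, k). Dt p * h + Ds p * k)) (at p within S)"
    using assms(1) unfolding C1_on2_def by blast
  have slice_deriv: "((\<lambda>t. \<psi> (t, s)) has_real_derivative Dt (t, s)) (at t)" if "t \<in> I" for t
  proof -
    have interior: "(t, s) \<in> interior S" using assms(2) that by blast
    then have "(\<psi> has_derivative (\<lambda>(h, k). Dt (t, s) * h + Ds (t, s) * k)) (at (t, s) within S)"
      using D interior_subset by blast
    then have "(\<psi> has_derivative (\<lambda>(h, k). Dt (t, s) * h + Ds (t, s) * k)) (at (t, s))"
      by (simp only: at_within_interior[OF interior])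
    moreover have "((\<lambda>t. (t, s)) has_derivative (\<lambda>h. (h, 0))) (at t)"
      by (auto intro!: derivative_eq_intros)
    ultimately have "((\<lambda>t. \<psi> (t, s)) has_derivative (\<lambda>h. Dt (t, s) * h)) (at t)"
      using has_derivative_compose[of "\<lambda>t. (t, s)"] by fastforce
    then show ?thesis
      by (simp add: has_field_derivative_def)
  qed
  then show "\<forall>t\<in>I. (\<lambda>t. \<psi> (t, s)) differentiable (at t)"
    using real_differentiable_def by blast
  have "continuous_on I (\<lambda>t. Dt (t, s))"
    using assms(2) interior_subset[of S]
    by (intro continuous_on_compose2[OF Dt] continuous_intros) auto
  then show "continuous_on I (deriv (\<lambda>t. \<psi> (t, s)))"
    by (rule continuous_on_eq) (simp add: DERIV_imp_deriv[OF slice_deriv])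
qed

lemma C1_on2_swap:
  assumes "C1_on2 S \<psi>"
  shows "C1_on2 (prod.swap ` S) (\<psi> \<circ> prod.swap)"
proof -
  obtain Dt Ds where Dt: "continuous_on S Dt" and Ds: "continuous_on S Ds"
    and D: "\<forall>p\<in>S. (\<psi> has_derivative (\<lambda>(h, k). Dt p * h + Ds p * k)) (at p within S)"
    using assms unfolding C1_on2_def by blast
  have swap: "(prod.swap has_derivative prod.swap) (at p within prod.swap ` S)" for p
    unfolding prod.swap_def[abs_def] by (intro derivative_eq_intros) auto
  show ?thesis
    unfolding C1_on2_def
  proof (intro exI conjI ballI)
    show "continuous_on (prod.swap ` S) (Ds \<circ> prod.swap)"
      and "continuous_on (prod.swap ` S) (Dt \<circ> prod.swap)"
      using Ds Dt by (auto simp: o_def image_image intro: continuous_on_compose2[OF _ continuous_on_swap])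
    fix p assume "p \<in> prod.swap ` S"
    then have "(\<psi> has_derivative (\<lambda>(h, k). Dt (prod.swap p) * h + Ds (prod.swap p) * k))
        (at (prod.swap p) within prod.swap ` prod.swap ` S)"
      using D by (auto simp: image_image)
    from has_derivative_in_compose[OF swap this]
    show "(\<psi> \<circ> prod.swap has_derivative
        (\<lambda>(h, k). (Ds \<circ> prod.swap) p * h + (Dt \<circ> prod.swap) p * k)) (at p within prod.swap ` S)"
      by (simp add: o_def case_prod_unfold add.commute)
  qed
qed

lemma caputo_slice_neg_at_diagonal:
  fixes \<psi> :: "real \<times> real \<Rightarrow> real"
  assumes "0 \<le> \<alpha>" "\<alpha> < 1" "0 < c" "c < T"
    and "C1_on2 ({0<..T} \<times> {0<..T}) \<psi>" and "continuous_on ({0..T} \<times> {0..T}) \<psi>"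
    and "set_integrable lborel {0<..<T} (deriv (\<lambda>t. \<psi> (t, c)))"
    and "\<psi> (c, c) = 0" and "\<forall>t\<in>{0..<c}. \<psi> (t, c) > 0"
  shows "caputo \<alpha> (\<lambda>t. \<psi> (t, c)) c < 0"
proof -
  have "(\<lambda>t. (t, c)) ` {0<..<T} \<subseteq> interior ({0<..T} \<times> {0<..T})"
    using assms(3,4) by (auto simp: interior_Times)
  note slice = C1_on2_slice[OF assms(5) this]
  show ?thesis
  proof (rule caputo_neg_at_root[OF assms(1-3)])
    show "continuous_on {0..c} (\<lambda>t. \<psi> (t, c))"
      using assms(3,4)
      by (intro continuous_on_compose2[OF assms(6)] continuous_intros) auto
    show "\<forall>\<tau>\<in>{0<..c}. (\<lambda>t. \<psi> (t, c)) differentiable (at \<tau>)"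
      using slice(1) assms(4) by auto
    show "continuous_on {0<..c} (deriv (\<lambda>t. \<psi> (t, c)))"
      by (rule continuous_on_subset[OF slice(2)]) (use assms(4) in auto)
    show "set_integrable lborel {0<..<c} (deriv (\<lambda>t. \<psi> (t, c)))"
      using assms(7) by (rule set_integrable_subset) (use assms(4) in auto)
    show "\<psi> (c, c) = 0" by (fact assms(8))
    show "\<forall>\<tau>\<in>{0..<c}. \<psi> (\<tau>, c) > 0" by (fact assms(9))
  qed
qed

lemma no_caputo_supersolution_vanishing_on_diagonal:
  fixes \<psi> :: "real \<times> real \<Rightarrow> real"
  assumes "0 \<le> \<alpha>" "\<alpha> < 1" "0 < T"
    and C1: "C1_on2 ({0<..T} \<times> {0<..T}) \<psi>" and cont: "continuous_on ({0..T} \<times> {0..T}) \<psi>"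
    and int_t: "\<forall>s\<in>{0..T}. set_integrable lborel {0<..<T} (deriv (\<lambda>t. \<psi> (t, s)))"
    and int_s: "\<forall>t\<in>{0..T}. set_integrable lborel {0<..<T} (deriv (\<lambda>s. \<psi> (t, s)))"
    and sum_nonneg: "\<forall>t\<in>{0<..<T}. \<forall>s\<in>{0<..<T}.
      caputo \<alpha> (\<lambda>t'. \<psi> (t', s)) t + caputo \<alpha> (\<lambda>s'. \<psi> (t, s')) s \<ge> 0"
    and diag: "\<forall>t\<in>{0..T}. \<psi> (t, t) = 0"
    and pos: "\<forall>t\<in>{0..T}. \<forall>s\<in>{0..T}. t \<noteq> s \<longrightarrow> \<psi> (t, s) > 0"
  shows False
proof -
  define c where "c = T / 2"
  have c: "0 < c" "c < T" using assms(3) by (auto simp: c_def)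
  have "caputo \<alpha> (\<lambda>t. \<psi> (t, c)) c < 0"
    using c C1 cont int_t diag pos
    by (intro caputo_slice_neg_at_diagonal[OF assms(1,2) c]) auto
  moreover have "caputo \<alpha> (\<lambda>s. (\<psi> \<circ> prod.swap) (s, c)) c < 0"
  proof (rule caputo_slice_neg_at_diagonal[OF assms(1,2) c])
    show "C1_on2 ({0<..T} \<times> {0<..T}) (\<psi> \<circ> prod.swap)"
      using C1_on2_swap[OF C1] by (simp add: product_swap)
    show "continuous_on ({0..T} \<times> {0..T}) (\<psi> \<circ> prod.swap)"
      using cont by (intro continuous_on_compose continuous_on_swap) (simp add: product_swap)
  qed (use c int_s diag pos in auto)
  moreover have "caputo \<alpha> (\<lambda>t. \<psi> (t, c)) c + caputo \<alpha> (\<lambda>s. \<psi> (c, s)) c \<ge> 0"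
    using sum_nonneg c by auto
  ultimately show False by simp
qed

theorem proposition7p3:
  fixes \<alpha> T :: real
  assumes "0 < \<alpha>" and "\<alpha> < 1" and "0 < T"
  shows "\<not> (\<exists>\<psi> :: real \<times> real \<Rightarrow> real.
      C1_on2 ({0<..T} \<times> {0<..T}) \<psi> \<and>
      continuous_on ({0..T} \<times> {0..T}) \<psi> \<and>
      (\<forall>s\<in>{0..T}. (\<forall>t\<in>{0<..<T}. (\<lambda>t. \<psi> (t, s)) differentiable (at t)) \<and>
          set_integrable lborel {0<..<T} (deriv (\<lambda>t. \<psi> (t, s)))) \<and>
      (\<forall>t\<in>{0..T}. (\<forall>s\<in>{0<..<T}. (\<lambda>s. \<psi> (t, s)) differentiable (at s)) \<and>
          set_integrable lborel {0<..<T} (deriv (\<lambda>s. \<psi> (t, s)))) \<and>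
      (\<forall>t\<in>{0<..<T}. \<forall>s\<in>{0<..<T}.
          caputo \<alpha> (\<lambda>t'. \<psi> (t', s)) t + caputo \<alpha> (\<lambda>s'. \<psi> (t, s')) s \<ge> 0) \<and>
      (\<forall>t\<in>{0..T}. \<psi> (t, t) = 0) \<and>
      (\<forall>t\<in>{0..T}. \<forall>s\<in>{0..T}. t \<noteq> s \<longrightarrow> \<psi> (t, s) > 0))"
  by (intro notI, elim exE conjE,
      rule no_caputo_supersolution_vanishing_on_diagonal[OF less_imp_le[OF assms(1)] assms(2,3)])
    auto

end
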